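(* If a central extension $0\to(M,\alpha_M)\to(K,\alpha_K)\xrightarrow{\pi}(L,\alpha_L)\to0$ of Hom-Leibniz $n$-algebras is a universal $\alpha$-central extension, then $(K,\alpha_K)$ is perfect and every central extension $\rho:(F,\alpha_F)\to(K,\alpha_K)$ of $(K,\alpha_K)$ splits (there is a homomorphism $\sigma:K\to F$ with $\rho\circ\sigma=\mathrm{id}_K$).
   Context: Fix a field $\mathbb K$ and $n\ge2$. A (multiplicative) Hom-Leibniz $n$-algebra is a $\mathbb K$-vector space $L$ with an $n$-linear bracket and a linear map $\alpha_L$ preserving the bracket, satisfying $[[x_1,\dots,x_n],\alpha_L(y_1),\dots,\alpha_L(y_{n-1})]=\sum_{i=1}^n[\alpha_L(x_1),\dots,[x_i,y_1,\dots,y_{n-1}],\dots,\alpha_L(x_n)]$. Homomorphisms preserve brackets and commute with twisting maps. Perfect: $K=[K,\dots,K]$. Center $Z(K)$: elements $x$ such that every bracket with $x$ in some position equals $0$. An extension of $L$ is a surjective homomorphism $\pi:K\to L$ with kernel $M$; central if $M\subseteq Z(K)$; $\alpha$-central if every bracket with $n-1$ entries in $\alpha_K(M)$ and the remaining entry (any position) in $K$ vanishes. A central extension $\pi$ is universal $\alpha$-central if for every $\alpha$-central extension $\pi':K'\to L$ there is a unique homomorphism $h:K\to K'$ with $\pi'\circ h=\pi$. *)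

theory Defs
  imports Main "HOL.Vector_Spaces" "HOL-Library.Product_Plus"
begin

text \<open>A Hom-Leibniz n-algebra over a field of type 'a is represented by a type 'v
(the underlying vector space, with scalar multiplication s), an n-ary bracket
br, taking a list of n arguments, and a twisting map al.\<close>

definition nlinear :: "nat \<Rightarrow> ('a::field \<Rightarrow> 'v::ab_group_add \<Rightarrow> 'v) \<Rightarrow> ('v list \<Rightarrow> 'v) \<Rightarrow> bool" where
  "nlinear n s br \<longleftrightarrow>
     (\<forall>xs i. length xs = n \<and> i < n \<longrightarrow> Vector_Spaces.linear s s (\<lambda>y. br (xs[i := y])))"

definition hom_leibniz :: "nat \<Rightarrow> ('a::field \<Rightarrow> 'v::ab_group_add \<Rightarrow> 'v) \<Rightarrow> ('v list \<Rightarrow> 'v) \<Rightarrow> ('v \<Rightarrow> 'v) \<Rightarrow> bool" where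
  "hom_leibniz n s br al \<longleftrightarrow>
     vector_space s \<and> nlinear n s br \<and> Vector_Spaces.linear s s al \<and>
     (\<forall>xs. length xs = n \<longrightarrow> al (br xs) = br (map al xs)) \<and>
     (\<forall>xs ys. length xs = n \<and> length ys = n - 1 \<longrightarrow>
        br (br xs # map al ys) =
        (\<Sum>i<n. br ((map al xs)[i := br (xs ! i # ys)])))"

definition hl_hom :: "nat \<Rightarrow> ('a::field \<Rightarrow> 'v::ab_group_add \<Rightarrow> 'v) \<Rightarrow> ('v list \<Rightarrow> 'v) \<Rightarrow> ('v \<Rightarrow> 'v)
     \<Rightarrow> ('a \<Rightarrow> 'w::ab_group_add \<Rightarrow> 'w) \<Rightarrow> ('w list \<Rightarrow> 'w) \<Rightarrow> ('w \<Rightarrow> 'w) \<Rightarrow> ('v \<Rightarrow> 'w) \<Rightarrow> bool" where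
  "hl_hom n s1 br1 al1 s2 br2 al2 f \<longleftrightarrow>
     Vector_Spaces.linear s1 s2 f \<and>
     (\<forall>xs. length xs = n \<longrightarrow> f (br1 xs) = br2 (map f xs)) \<and>
     (\<forall>x. f (al1 x) = al2 (f x))"

definition perfect :: "nat \<Rightarrow> ('a::field \<Rightarrow> 'v::ab_group_add \<Rightarrow> 'v) \<Rightarrow> ('v list \<Rightarrow> 'v) \<Rightarrow> bool" where
  "perfect n s br \<longleftrightarrow> module.span s {br xs | xs. length xs = n} = UNIV"

definition center :: "nat \<Rightarrow> ('v list \<Rightarrow> 'v::ab_group_add) \<Rightarrow> 'v set" where
  "center n br = {x. \<forall>xs i. length xs = n \<and> i < n \<longrightarrow> br (xs[i := x]) = 0}"

definition hl_extension :: "nat \<Rightarrow> ('a::field \<Rightarrow> 'k::ab_group_add \<Rightarrow> 'k) \<Rightarrow> ('k list \<Rightarrow> 'k) \<Rightarrow> ('k \<Rightarrow> 'k)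
     \<Rightarrow> ('a \<Rightarrow> 'l::ab_group_add \<Rightarrow> 'l) \<Rightarrow> ('l list \<Rightarrow> 'l) \<Rightarrow> ('l \<Rightarrow> 'l) \<Rightarrow> ('k \<Rightarrow> 'l) \<Rightarrow> bool" where
  "hl_extension n sK brK aK sL brL aL p \<longleftrightarrow>
     hom_leibniz n sK brK aK \<and> hom_leibniz n sL brL aL \<and>
     hl_hom n sK brK aK sL brL aL p \<and> surj p"

definition central_ext :: "nat \<Rightarrow> ('a::field \<Rightarrow> 'k::ab_group_add \<Rightarrow> 'k) \<Rightarrow> ('k list \<Rightarrow> 'k) \<Rightarrow> ('k \<Rightarrow> 'k)
     \<Rightarrow> ('a \<Rightarrow> 'l::ab_group_add \<Rightarrow> 'l) \<Rightarrow> ('l list \<Rightarrow> 'l) \<Rightarrow> ('l \<Rightarrow> 'l) \<Rightarrow> ('k \<Rightarrow> 'l) \<Rightarrow> bool" where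
  "central_ext n sK brK aK sL brL aL p \<longleftrightarrow>
     hl_extension n sK brK aK sL brL aL p \<and> {x. p x = 0} \<subseteq> center n brK"

definition alpha_central_ext :: "nat \<Rightarrow> ('a::field \<Rightarrow> 'k::ab_group_add \<Rightarrow> 'k) \<Rightarrow> ('k list \<Rightarrow> 'k) \<Rightarrow> ('k \<Rightarrow> 'k)
     \<Rightarrow> ('a \<Rightarrow> 'l::ab_group_add \<Rightarrow> 'l) \<Rightarrow> ('l list \<Rightarrow> 'l) \<Rightarrow> ('l \<Rightarrow> 'l) \<Rightarrow> ('k \<Rightarrow> 'l) \<Rightarrow> bool" where
  "alpha_central_ext n sK brK aK sL brL aL p \<longleftrightarrow>
     hl_extension n sK brK aK sL brL aL p \<and>
     (\<forall>xs i. length xs = n \<and> i < n \<and>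
        (\<forall>j<n. j \<noteq> i \<longrightarrow> xs ! j \<in> aK ` {x. p x = 0}) \<longrightarrow> brK xs = 0)"

text \<open>Universal alpha-central extension, with the universal property tested against
all alpha-central extensions of L whose underlying space is (a vector space
structure on) the type 'b.  HOL cannot quantify over types inside a formula,
so the type of test extensions is a parameter.\<close>

definition univ_alpha_central :: "'b::ab_group_add itself \<Rightarrow> nat \<Rightarrow> ('a::field \<Rightarrow> 'k::ab_group_add \<Rightarrow> 'k)
     \<Rightarrow> ('k list \<Rightarrow> 'k) \<Rightarrow> ('k \<Rightarrow> 'k)
     \<Rightarrow> ('a \<Rightarrow> 'l::ab_group_add \<Rightarrow> 'l) \<Rightarrow> ('l list \<Rightarrow> 'l) \<Rightarrow> ('l \<Rightarrow> 'l) \<Rightarrow> ('k \<Rightarrow> 'l) \<Rightarrow> bool" where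
  "univ_alpha_central T n sK brK aK sL brL aL p \<longleftrightarrow>
     central_ext n sK brK aK sL brL aL p \<and>
     (\<forall>(sB :: 'a \<Rightarrow> 'b \<Rightarrow> 'b) brB aB q.
        alpha_central_ext n sB brB aB sL brL aL q \<longrightarrow>
        (\<exists>!h. hl_hom n sK brK aK sB brB aB h \<and> (\<forall>x. q (h x) = p x)))"

end

theory Submission
  imports Defs
begin

(* Write K (+) V for the Hom-Leibniz algebra K x V whose bracket only sees the first
   components, twisted by aK x be; projecting to K and then to L makes it an alpha-central
   extension of L as soon as n >= 2.  By universality, homomorphisms K -> K (+) V over L are
   unique.

   Perfectness: take a linear projection g of K along the span S of all brackets.  Since aK
   preserves S, g intertwines aK with be = g o aK, so x |-> (x, g x) and x |-> (x, 0) are both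
   homomorphisms K -> K (+) K over L; hence g = 0, i.e. S = K.

   Splitting: for a central extension r : F -> K, the composite p o r is alpha-central.  A bracket
   in F whose entries other than the i-th are twists of elements of ker (p o r) is linear in the
   i-th entry, vanishes on brackets of F (Leibniz identity plus centrality) and on ker r, and
   these span F because K is perfect.  Universality gives h : K -> F over L, and r o h is an
   endomorphism of K over L, hence the identity. *)

lemma (in vector_space) obtain_projection_along_span:
  obtains g where "Vector_Spaces.linear scale scale g" "\<And>x. x \<in> span A \<Longrightarrow> g x = 0"
    "\<And>x. x - g x \<in> span A"
proof -
  interpret vector_space_pair scale scale by unfold_locales
  obtain B0 where B0: "B0 \<subseteq> span A" "independent B0" "span A \<subseteq> span B0"
    by (rule maximal_independent_subset)
  obtain B where B: "B0 \<subseteq> B" "independent B" "UNIV \<subseteq> span B"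
    by (rule maximal_independent_subset_extend[OF subset_UNIV B0(2)])
  obtain g where g: "Vector_Spaces.linear scale scale g" "\<And>b. b \<in> B \<Longrightarrow> g b = (if b \<in> B0 then 0 else b)"
    using linear_independent_extend[OF B(2), of "\<lambda>b. if b \<in> B0 then 0 else b"] by blast
  have span_B0: "span B0 = span A"
    using B0 span_minimal[of B0 "span A"] by auto
  have id_minus_g: "Vector_Spaces.linear scale scale (\<lambda>x. x - g x)"
    using linear_compose_sub[of id g] g(1) by (simp add: linear_id)
  show thesis
  proof (rule that[OF g(1)])
    show "g x = 0" if "x \<in> span A" for x
      by (rule linear_eq_0_on_span[OF g(1), of B0]) (use that g(2) B(1) span_B0 in auto)
    show "x - g x \<in> span A" for x
    proof (rule span_induct[of x B "\<lambda>x. x - g x \<in> span A"])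
      show "subspace {x. x - g x \<in> span A}"
        using linear_subspace_vimage[OF id_minus_g subspace_span] by (simp add: vimage_def)
      show "b - g b \<in> span A" if "b \<in> B" for b
        using that g(2) B0(1) by (auto simp: span_base span_zero)
    qed (use B(3) in auto)
  qed
qed

lemma linear_zero_map: "vector_space s \<Longrightarrow> vector_space t \<Longrightarrow> Vector_Spaces.linear s t (\<lambda>_. 0)"
  by (simp add: linear_iff module.scale_zero_right module_iff_vector_space)

lemma bracket_eq_0_if_central_entry:
  assumes "length zs = n" "j < n" "zs ! j \<in> center n br"
  shows "br zs = 0"
proof -
  have "br (zs[j := zs ! j]) = 0" using assms unfolding center_def by blast
  then show ?thesis by simp
qed

lemma hl_hom_id: "hom_leibniz n s br al \<Longrightarrow> hl_hom n s br al s br al (\<lambda>x. x)"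
  unfolding hl_hom_def hom_leibniz_def linear_iff by auto

lemma hl_hom_comp:
  assumes "hl_hom n s1 b1 a1 s2 b2 a2 f" "hl_hom n s2 b2 a2 s3 b3 a3 g"
  shows "hl_hom n s1 b1 a1 s3 b3 a3 (\<lambda>x. g (f x))"
proof -
  have "Vector_Spaces.linear s1 s3 (g \<circ> f)"
    using assms Vector_Spaces.linear_compose unfolding hl_hom_def by blast
  then show ?thesis using assms unfolding hl_hom_def by (auto simp: comp_def)
qed

definition scale_prod :: "('a::field \<Rightarrow> 'v \<Rightarrow> 'v) \<Rightarrow> ('a \<Rightarrow> 'w \<Rightarrow> 'w) \<Rightarrow> 'a \<Rightarrow> 'v \<times> 'w \<Rightarrow> 'v \<times> 'w" where
  "scale_prod s t c z = (s c (fst z), t c (snd z))"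

definition bracket_fst :: "('v list \<Rightarrow> 'v) \<Rightarrow> ('v \<times> 'w::zero) list \<Rightarrow> 'v \<times> 'w" where
  "bracket_fst br xs = (br (map fst xs), 0)"

lemma vector_space_scale_prod:
  "vector_space s \<Longrightarrow> vector_space t \<Longrightarrow> vector_space (scale_prod s t)"
  unfolding vector_space_def scale_prod_def by (auto simp: prod_eq_iff)

lemma linear_pair_scale_prod:
  assumes "Vector_Spaces.linear r s f" "Vector_Spaces.linear r t g"
  shows "Vector_Spaces.linear r (scale_prod s t) (\<lambda>x. (f x, g x))"
  using assms vector_space_scale_prod unfolding linear_iff scale_prod_def by auto

lemma linear_fst_scale_prod:
  "vector_space s \<Longrightarrow> vector_space t \<Longrightarrow> Vector_Spaces.linear (scale_prod s t) s fst"
  using vector_space_scale_prod unfolding linear_iff scale_prod_def by auto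

lemma linear_map_prod_scale_prod:
  assumes "Vector_Spaces.linear s s f" "Vector_Spaces.linear t t g"
  shows "Vector_Spaces.linear (scale_prod s t) (scale_prod s t) (map_prod f g)"
  using assms vector_space_scale_prod unfolding linear_iff scale_prod_def by auto

lemma hom_leibniz_bracket_fst:
  fixes s :: "'a::field \<Rightarrow> 'v::ab_group_add \<Rightarrow> 'v" and t :: "'a \<Rightarrow> 'w::ab_group_add \<Rightarrow> 'w"
  assumes H: "hom_leibniz n s br al" and be: "Vector_Spaces.linear t t be"
  shows "hom_leibniz n (scale_prod s t) (bracket_fst br) (map_prod al be)"
proof -
  have vs: "vector_space s" and vt: "vector_space t" and nl: "nlinear n s br"
    and la: "Vector_Spaces.linear s s al"
    and mult: "\<And>xs. length xs = n \<Longrightarrow> al (br xs) = br (map al xs)"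
    and leib: "\<And>xs ys. length xs = n \<Longrightarrow> length ys = n - 1 \<Longrightarrow>
        br (br xs # map al ys) = (\<Sum>i<n. br ((map al xs)[i := br (xs ! i # ys)]))"
    using H be unfolding hom_leibniz_def linear_iff by auto
  have "nlinear n (scale_prod s t) (bracket_fst br)"
    unfolding nlinear_def
  proof (intro allI impI)
    fix xs :: "('v \<times> 'w) list" and i assume "length xs = n \<and> i < n"
    then have "Vector_Spaces.linear s s (\<lambda>y. br ((map fst xs)[i := y]))"
      using nl unfolding nlinear_def by auto
    from linear_map_prod_scale_prod[OF this linear_zero_map[OF vt vt]]
    show "Vector_Spaces.linear (scale_prod s t) (scale_prod s t) (\<lambda>y. bracket_fst br (xs[i := y]))"
      by (simp add: bracket_fst_def map_update map_prod_def split_def)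
  qed
  moreover have "\<forall>xs ys. length xs = n \<and> length ys = n - 1 \<longrightarrow>
        bracket_fst br (bracket_fst br xs # map (map_prod al be) ys) =
        (\<Sum>i<n. bracket_fst br ((map (map_prod al be) xs)[i := bracket_fst br (xs ! i # ys)]))"
  proof (intro allI impI)
    fix xs ys :: "('v \<times> 'w) list" assume len: "length xs = n \<and> length ys = n - 1"
    have "(\<Sum>i<n. bracket_fst br ((map (map_prod al be) xs)[i := bracket_fst br (xs ! i # ys)]))
        = (\<Sum>i<n. (br ((map al (map fst xs))[i := br (map fst xs ! i # map fst ys)]), 0))"
      by (rule sum.cong) (use len in \<open>auto simp: bracket_fst_def map_update comp_def\<close>)
    also have "\<dots> = (br (br (map fst xs) # map al (map fst ys)), 0)"
      using leib[of "map fst xs" "map fst ys"] len by (simp add: sum_prod)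
    finally show "bracket_fst br (bracket_fst br xs # map (map_prod al be) ys) =
        (\<Sum>i<n. bracket_fst br ((map (map_prod al be) xs)[i := bracket_fst br (xs ! i # ys)]))"
      by (simp add: bracket_fst_def comp_def)
  qed
  ultimately show ?thesis
    using vector_space_scale_prod[OF vs vt] linear_map_prod_scale_prod[OF la be] mult
      module_hom.zero[OF module_hom_linearI[OF be]]
    unfolding hom_leibniz_def by (simp add: bracket_fst_def comp_def)
qed

lemma hl_hom_pair_bracket_fst:
  assumes f: "hl_hom n s1 b1 a1 s br al f" and g: "Vector_Spaces.linear s1 t g"
    and g_bracket: "\<And>xs. length xs = n \<Longrightarrow> g (b1 xs) = 0"
    and g_twist: "\<And>x. g (a1 x) = be (g x)"
  shows "hl_hom n s1 b1 a1 (scale_prod s t) (bracket_fst br) (map_prod al be) (\<lambda>x. (f x, g x))"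
  using f linear_pair_scale_prod[OF _ g] g_bracket g_twist
  unfolding hl_hom_def by (auto simp: bracket_fst_def comp_def)

lemma alpha_central_ext_bracket_fst:
  fixes t :: "'a::field \<Rightarrow> 'w::ab_group_add \<Rightarrow> 'w"
  assumes C: "central_ext n sK brK aK sL brL aL p" and n: "n \<ge> 2"
    and be: "Vector_Spaces.linear t t be"
  shows "alpha_central_ext n (scale_prod sK t) (bracket_fst brK) (map_prod aK be) sL brL aL (p \<circ> fst)"
proof -
  have HK: "hom_leibniz n sK brK aK" and HL: "hom_leibniz n sL brL aL"
    and hp: "hl_hom n sK brK aK sL brL aL p" and sp: "surj p"
    and cen: "{x. p x = 0} \<subseteq> center n brK"
    using C unfolding central_ext_def hl_extension_def by auto
  have vs: "vector_space sK" "vector_space t" and aL: "Vector_Spaces.linear sL sL aL"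
    using HK HL be unfolding hom_leibniz_def linear_iff by auto
  have "hl_hom n (scale_prod sK t) (bracket_fst brK) (map_prod aK be) sL brL aL (p \<circ> fst)"
    using hp Vector_Spaces.linear_compose[OF linear_fst_scale_prod[OF vs]]
    unfolding hl_hom_def by (auto simp: bracket_fst_def comp_def)
  moreover have "surj (p \<circ> fst)"
    using sp by (simp add: surj_def)
  moreover have "bracket_fst brK xs = 0"
    if len: "length xs = n" and i: "i < n"
      and entries: "\<forall>j<n. j \<noteq> i \<longrightarrow> xs ! j \<in> map_prod aK be ` {z. (p \<circ> fst) z = 0}"
    for xs i
  proof -
    define j where "j = (if i = 0 then 1 else 0::nat)"
    have j: "j < n" "j \<noteq> i" using n i by (auto simp: j_def)
    then obtain z where z: "p (fst z) = 0" "xs ! j = map_prod aK be z" using entries by force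
    have "p (aK (fst z)) = aL (p (fst z))" using hp unfolding hl_hom_def by blast
    also have "\<dots> = 0"
      using z(1) module_hom.zero[OF module_hom_linearI[OF aL]] by simp
    finally have "p (aK (fst z)) = 0" .
    moreover have "map fst xs ! j = aK (fst z)" using z(2) j len by (simp add: map_prod_def split_def)
    ultimately have "map fst xs ! j \<in> center n brK" using cen by auto
    then show ?thesis
      using bracket_eq_0_if_central_entry[of "map fst xs" n j] j len
      by (simp add: bracket_fst_def zero_prod_def)
  qed
  ultimately show ?thesis
    unfolding alpha_central_ext_def hl_extension_def
    using hom_leibniz_bracket_fst[OF HK be] HL by blast
qed

lemma univ_alpha_central_lift_unique:
  fixes sK :: "'a::field \<Rightarrow> 'k::ab_group_add \<Rightarrow> 'k" and t :: "'a \<Rightarrow> 'w::ab_group_add \<Rightarrow> 'w"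
  assumes U: "univ_alpha_central TYPE('k \<times> 'w) n sK brK aK sL brL aL p" and n: "n \<ge> 2"
    and be: "Vector_Spaces.linear t t be"
    and h1: "hl_hom n sK brK aK (scale_prod sK t) (bracket_fst brK) (map_prod aK be) h1"
      "\<And>x. p (fst (h1 x)) = p x"
    and h2: "hl_hom n sK brK aK (scale_prod sK t) (bracket_fst brK) (map_prod aK be) h2"
      "\<And>x. p (fst (h2 x)) = p x"
  shows "h1 = h2"
proof -
  have "central_ext n sK brK aK sL brL aL p"
    using U unfolding univ_alpha_central_def by blast
  from alpha_central_ext_bracket_fst[OF this n be]
  have "\<exists>!h. hl_hom n sK brK aK (scale_prod sK t) (bracket_fst brK) (map_prod aK be) h
      \<and> (\<forall>x. (p \<circ> fst) (h x) = p x)"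
    using U unfolding univ_alpha_central_def by blast
  then show ?thesis using h1 h2 by auto
qed

lemma univ_alpha_central_endo_eq_id:
  fixes sK :: "'a::field \<Rightarrow> 'k::ab_group_add \<Rightarrow> 'k"
  assumes U: "univ_alpha_central TYPE('k \<times> 'k) n sK brK aK sL brL aL p" and n: "n \<ge> 2"
    and f: "hl_hom n sK brK aK sK brK aK f" and p_f: "\<And>x. p (f x) = p x"
  shows "f x = x"
proof -
  have HK: "hom_leibniz n sK brK aK"
    using U unfolding univ_alpha_central_def central_ext_def hl_extension_def by blast
  then have zero: "Vector_Spaces.linear sK sK (\<lambda>_. 0)"
    unfolding hom_leibniz_def using linear_zero_map by blast
  have lift: "hl_hom n sK brK aK (scale_prod sK sK) (bracket_fst brK) (map_prod aK (\<lambda>_. 0))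
      (\<lambda>x. (h x, 0))" if "hl_hom n sK brK aK sK brK aK h" for h
    by (rule hl_hom_pair_bracket_fst[OF that zero]) simp_all
  have "(\<lambda>x. (f x, 0::'k)) = (\<lambda>x. (x, 0))"
    by (rule univ_alpha_central_lift_unique[OF U n zero lift[OF f] _ lift[OF hl_hom_id[OF HK]]])
      (simp_all add: p_f)
  then show ?thesis by (metis prod.inject)
qed

lemma univ_alpha_central_perfect:
  fixes sK :: "'a::field \<Rightarrow> 'k::ab_group_add \<Rightarrow> 'k"
  assumes U: "univ_alpha_central TYPE('k \<times> 'k) n sK brK aK sL brL aL p" and n: "n \<ge> 2"
  shows "perfect n sK brK"
proof -
  have HK: "hom_leibniz n sK brK aK"
    using U unfolding univ_alpha_central_def central_ext_def hl_extension_def by blast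
  then have vs: "vector_space sK" and aK: "Vector_Spaces.linear sK sK aK"
    and mult: "\<And>xs. length xs = n \<Longrightarrow> aK (brK xs) = brK (map aK xs)"
    unfolding hom_leibniz_def by auto
  interpret K: vector_space sK by (rule vs)
  define Br where "Br = {brK xs | xs. length xs = n}"
  obtain g where g: "Vector_Spaces.linear sK sK g" and g_Br: "\<And>x. x \<in> K.span Br \<Longrightarrow> g x = 0"
    and g_proj: "\<And>x. x - g x \<in> K.span Br"
    using K.obtain_projection_along_span[of Br] by blast
  have aK_Br: "aK x \<in> K.span Br" if "x \<in> K.span Br" for x
  proof -
    have "aK ` Br \<subseteq> Br" unfolding Br_def using mult by force
    then have "K.span (aK ` Br) \<subseteq> K.span Br" by (rule K.span_mono)
    moreover have "aK x \<in> K.span (aK ` Br)"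
      using that module_hom.span_image[OF module_hom_linearI[OF aK]] by blast
    ultimately show ?thesis by blast
  qed
  define be where "be = g \<circ> aK"
  have be: "Vector_Spaces.linear sK sK be"
    unfolding be_def by (rule Vector_Spaces.linear_compose[OF aK g])
  have g_twist: "g (aK x) = be (g x)" for x
  proof -
    have "g (aK x) - g (aK (g x)) = g (aK (x - g x))"
      by (simp add: module_hom.diff[OF module_hom_linearI[OF g]] module_hom.diff[OF module_hom_linearI[OF aK]])
    also have "\<dots> = 0" by (rule g_Br[OF aK_Br[OF g_proj]])
    finally show ?thesis by (simp add: be_def)
  qed
  have g_bracket: "g (brK xs) = 0" if "length xs = n" for xs
    using that by (intro g_Br K.span_base) (auto simp: Br_def)
  have "(\<lambda>x. (x, g x)) = (\<lambda>x. (x, 0))"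
  proof (rule univ_alpha_central_lift_unique[OF U n be])
    show "hl_hom n sK brK aK (scale_prod sK sK) (bracket_fst brK) (map_prod aK be) (\<lambda>x. (x, g x))"
      by (rule hl_hom_pair_bracket_fst[OF hl_hom_id[OF HK] g g_bracket g_twist])
    show "hl_hom n sK brK aK (scale_prod sK sK) (bracket_fst brK) (map_prod aK be) (\<lambda>x. (x, 0))"
      by (rule hl_hom_pair_bracket_fst[OF hl_hom_id[OF HK] linear_zero_map[OF vs vs]])
        (simp_all add: module_hom.zero[OF module_hom_linearI[OF be]])
  qed simp_all
  then have "x \<in> K.span Br" for x
    using g_proj[of x] by (metis diff_zero prod.inject)
  then show ?thesis unfolding perfect_def Br_def by blast
qed

lemma central_ext_bracket_in_center:
  assumes C: "central_ext n sF brF aF sK brK aK r"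
    and zs: "length zs = n" "j < n" "r (zs ! j) \<in> center n brK"
  shows "brF zs \<in> center n brF"
proof -
  have "r (brF zs) = brK (map r zs)"
    using C zs(1) unfolding central_ext_def hl_extension_def hl_hom_def by blast
  also have "\<dots> = 0"
    by (rule bracket_eq_0_if_central_entry[of _ n j]) (use zs in auto)
  finally show ?thesis using C unfolding central_ext_def by blast
qed

lemma central_ext_twisted_bracket_bracket_eq_0:
  assumes C: "central_ext n sF brF aF sK brK aK r" and n: "n \<ge> 2"
    and ys: "length ys = n" "i < n" "\<forall>j<n. j \<noteq> i \<longrightarrow> r (ys ! j) \<in> center n brK"
    and zs: "length zs = n"
  shows "brF ((map aF ys)[i := brF zs]) = 0"
proof -
  (* Leibniz identity for ys[i := z] against zt, where zs = z # zt: its left-hand side and all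
     summands except the i-th vanish by centrality. *)
  have leib: "\<And>xs ys. length xs = n \<Longrightarrow> length ys = n - 1 \<Longrightarrow>
      brF (brF xs # map aF ys) = (\<Sum>k<n. brF ((map aF xs)[k := brF (xs ! k # ys)]))"
    using C unfolding central_ext_def hl_extension_def hom_leibniz_def by auto
  obtain z zt where zs_eq: "zs = z # zt" and zt: "length zt = n - 1"
    using zs n by (cases zs) auto
  define xs where "xs = ys[i := z]"
  have xs: "length xs = n" using ys by (simp add: xs_def)
  define j where "j = (if i = 0 then 1 else 0::nat)"
  have j: "j < n" "j \<noteq> i" using n by (auto simp: j_def)
  have "brF xs \<in> center n brF"
    by (rule central_ext_bracket_in_center[OF C xs j(1)]) (use j ys in \<open>simp add: xs_def\<close>)
  then have "0 = brF (brF xs # map aF zt)"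
    using bracket_eq_0_if_central_entry[of "brF xs # map aF zt" n 0] n zt by simp
  also have "\<dots> = (\<Sum>k<n. brF ((map aF xs)[k := brF (xs ! k # zt)]))"
    by (rule leib[OF xs zt])
  also have "\<dots> = (\<Sum>k\<in>{i}. brF ((map aF xs)[k := brF (xs ! k # zt)]))"
  proof (rule sum.mono_neutral_right)
    show "\<forall>k\<in>{..<n} - {i}. brF ((map aF xs)[k := brF (xs ! k # zt)]) = 0"
    proof
      fix k assume k: "k \<in> {..<n} - {i}"
      have "brF (xs ! k # zt) \<in> center n brF"
        by (rule central_ext_bracket_in_center[OF C, of _ 0]) (use k ys zt n in \<open>auto simp: xs_def\<close>)
      then show "brF ((map aF xs)[k := brF (xs ! k # zt)]) = 0"
        using k xs unfolding center_def by auto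
    qed
  qed (use ys in auto)
  also have "\<dots> = brF ((map aF ys)[i := brF zs])"
    using ys zs_eq by (simp add: xs_def map_update)
  finally show ?thesis by simp
qed

lemma central_ext_twisted_bracket_eq_0:
  fixes sF :: "'a::field \<Rightarrow> 'f::ab_group_add \<Rightarrow> 'f" and sK :: "'a \<Rightarrow> 'k::ab_group_add \<Rightarrow> 'k"
  assumes C: "central_ext n sF brF aF sK brK aK r" and PK: "perfect n sK brK" and n: "n \<ge> 2"
    and ys: "length ys = n" "i < n" "\<forall>j<n. j \<noteq> i \<longrightarrow> r (ys ! j) \<in> center n brK"
  shows "brF ((map aF ys)[i := w]) = 0"
proof -
  have HF: "hom_leibniz n sF brF aF" and HK: "hom_leibniz n sK brK aK"
    and r: "hl_hom n sF brF aF sK brK aK r" and surj_r: "surj r"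
    and ker_r: "{x. r x = 0} \<subseteq> center n brF"
    using C unfolding central_ext_def hl_extension_def by auto
  have r_lin: "module_hom sF sK r" and r_br: "\<And>zs. length zs = n \<Longrightarrow> r (brF zs) = brK (map r zs)"
    using r unfolding hl_hom_def by (auto simp: linear_iff_module_hom)
  have K: "vector_space sK" using HK unfolding hom_leibniz_def by blast
  define BrF where "BrF = {brF zs | zs. length zs = n}"
  define Phi where "Phi v = brF ((map aF ys)[i := v])" for v
  have Phi_lin: "module_hom sF sF Phi"
    using HF ys unfolding hom_leibniz_def nlinear_def Phi_def by (simp add: linear_iff_module_hom)
  have Phi_BrF: "Phi b = 0" if "b \<in> BrF" for b
    using that central_ext_twisted_bracket_bracket_eq_0[OF C n ys] unfolding BrF_def Phi_def by auto
  have Phi_ker: "Phi c = 0" if "r c = 0" for c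
    using that ker_r ys unfolding Phi_def center_def by auto
  have "{brK ks | ks. length ks = n} \<subseteq> r ` BrF"
  proof
    fix k assume "k \<in> {brK ks | ks. length ks = n}"
    then obtain ks where k: "k = brK ks" and ks: "length ks = n" by blast
    have "brK ks = r (brF (map (inv r) ks))"
      using r_br[of "map (inv r) ks"] ks by (simp add: comp_def surj_f_inv_f[OF surj_r] map_idI)
    moreover have "brF (map (inv r) ks) \<in> BrF" using ks unfolding BrF_def by auto
    ultimately show "k \<in> r ` BrF" using k by blast
  qed
  then have "r w \<in> module.span sK (r ` BrF)"
    using PK module.span_mono[of sK] K unfolding perfect_def module_iff_vector_space by blast
  then obtain u where u: "u \<in> module.span sF BrF" "r w = r u"
    unfolding module_hom.span_image[OF r_lin] by blast
  have "Phi w = Phi u + Phi (w - u)"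
    using module_hom.add[OF Phi_lin, of u "w - u"] by simp
  also have "Phi u = 0"
    by (rule module_hom.eq_0_on_span[OF Phi_lin _ u(1)]) (rule Phi_BrF)
  also have "Phi (w - u) = 0"
    by (rule Phi_ker) (simp add: module_hom.diff[OF r_lin] u(2))
  finally show ?thesis by (simp add: Phi_def)
qed

lemma central_ext_comp_alpha_central:
  fixes sF :: "'a::field \<Rightarrow> 'f::ab_group_add \<Rightarrow> 'f" and sK :: "'a \<Rightarrow> 'k::ab_group_add \<Rightarrow> 'k"
  assumes CR: "central_ext n sF brF aF sK brK aK r" and CP: "central_ext n sK brK aK sL brL aL p"
    and PK: "perfect n sK brK" and n: "n \<ge> 2"
  shows "alpha_central_ext n sF brF aF sL brL aL (p \<circ> r)"
proof -
  have "hl_hom n sF brF aF sL brL aL (\<lambda>x. p (r x))"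
    using CR CP hl_hom_comp unfolding central_ext_def hl_extension_def by blast
  moreover have "surj (p \<circ> r)"
    using CR CP comp_surj unfolding central_ext_def hl_extension_def by blast
  moreover have "brF xs = 0"
    if len: "length xs = n" and i: "i < n"
      and entries: "\<forall>j<n. j \<noteq> i \<longrightarrow> xs ! j \<in> aF ` {x. (p \<circ> r) x = 0}" for xs i
  proof -
    have "\<forall>j<n. \<exists>y. j \<noteq> i \<longrightarrow> p (r y) = 0 \<and> xs ! j = aF y"
      using entries by auto
    then obtain ys where ys: "length ys = n"
      and ys_ker: "\<forall>j<n. j \<noteq> i \<longrightarrow> p (r (ys ! j)) = 0 \<and> xs ! j = aF (ys ! j)"
      unfolding Skolem_list_nth by blast
    have "xs = (map aF ys)[i := xs ! i]"
    proof (rule nth_equalityI)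
      show "xs ! j = (map aF ys)[i := xs ! i] ! j" if "j < length xs" for j
        using that len ys ys_ker by (cases "j = i") auto
    qed (simp add: len ys)
    moreover have "\<forall>j<n. j \<noteq> i \<longrightarrow> r (ys ! j) \<in> center n brK"
      using ys_ker CP unfolding central_ext_def by blast
    ultimately show ?thesis
      using central_ext_twisted_bracket_eq_0[OF CR PK n ys i] by metis
  qed
  ultimately show ?thesis
    using CR CP unfolding alpha_central_ext_def hl_extension_def central_ext_def
    by (simp add: comp_def) blast
qed

theorem theorem3p11:
  fixes n :: nat
    and sK :: "'a::field \<Rightarrow> 'k::ab_group_add \<Rightarrow> 'k" and brK :: "'k list \<Rightarrow> 'k" and aK :: "'k \<Rightarrow> 'k"
    and sL :: "'a \<Rightarrow> 'l::ab_group_add \<Rightarrow> 'l" and brL :: "'l list \<Rightarrow> 'l" and aL :: "'l \<Rightarrow> 'l"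
    and p :: "'k \<Rightarrow> 'l"
  assumes "n \<ge> 2"
    and "univ_alpha_central TYPE('f::ab_group_add) n sK brK aK sL brL aL p"
    and "univ_alpha_central TYPE('k \<times> 'k) n sK brK aK sL brL aL p"
  shows "perfect n sK brK \<and>
    (\<forall>(sF :: 'a \<Rightarrow> 'f \<Rightarrow> 'f) brF aF r.
       central_ext n sF brF aF sK brK aK r \<longrightarrow>
       (\<exists>sigma. hl_hom n sK brK aK sF brF aF sigma \<and> (\<forall>x. r (sigma x) = x)))"
proof -
  have perfect: "perfect n sK brK"
    by (rule univ_alpha_central_perfect[OF assms(3,1)])
  have "\<exists>sigma. hl_hom n sK brK aK sF brF aF sigma \<and> (\<forall>x. r (sigma x) = x)"
    if CR: "central_ext n sF brF aF sK brK aK r" for sF :: "'a \<Rightarrow> 'f \<Rightarrow> 'f" and brF aF r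
  proof -
    have CP: "central_ext n sK brK aK sL brL aL p"
      using assms(3) unfolding univ_alpha_central_def by blast
    from central_ext_comp_alpha_central[OF CR CP perfect assms(1)]
    obtain h where h: "hl_hom n sK brK aK sF brF aF h" and p_r_h: "\<And>x. p (r (h x)) = p x"
      using assms(2) unfolding univ_alpha_central_def by fastforce
    have "hl_hom n sK brK aK sK brK aK (\<lambda>x. r (h x))"
      using h CR hl_hom_comp unfolding central_ext_def hl_extension_def by blast
    then have "r (h x) = x" for x
      by (rule univ_alpha_central_endo_eq_id[OF assms(3,1)]) (rule p_r_h)
    with h show ?thesis by blast
  qed
  with perfect show ?thesis by blast
qed

end
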